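(* Let $\Omega=\{1,\dots,m\}^{\mathbb{N}}$, let $\mathcal{M}$ be the set of Borel probabilities on $\Omega$ with the Monge–Kantorovich metric $d_{MK}$, and let $R:\Omega\times\Omega\to\Omega$ be continuous and $s$-Lipschitz in the second variable, i.e. $d_\Omega(R(x,y),R(x,y'))\le s\,d_\Omega(y,y')$ for all $x,y,y'\in\Omega$. Let $*$ be the convolution associated to $R$. Then for each fixed $\eta\in\mathcal{M}$, the map $\mu\mapsto\eta*\mu$ is $s$-Lipschitz with respect to $d_{MK}$: $d_{MK}(\eta*\mu,\eta*\mu')\le s\,d_{MK}(\mu,\mu')$ for all $\mu,\mu'\in\mathcal{M}$.
   Context: $d_\Omega(\alpha,\beta)=2^{-k}$ with $k=\min\{i:\alpha_i\neq\beta_i\}$ (and $0$ if $\alpha=\beta$); $d_{MK}(\mu,\nu)=\sup\{\int f\,d\mu-\int f\,d\nu : f \text{ 1-Lipschitz}\}$. The convolution associated to $R$ is defined for $\nu,\mu\in\mathcal{M}$ by $(\nu*\mu)(E)=(\nu\times\mu)(R^{-1}(E))$, i.e. $\int_\Omega f\,d(\nu*\mu)=\int\int f(R(x,y))\,d\nu(x)\,d\mu(y)$ for all continuous $f:\Omega\to\mathbb{R}$. *)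

theory Defs
  imports "HOL-Probability.Probability"
begin

text \<open>The sequence space Omega = {1,...,m}^N (sequences indexed by nat, starting at 0).\<close>
definition Omega :: "nat \<Rightarrow> (nat \<Rightarrow> nat) set" where
  "Omega m = {\<alpha>. \<forall>i. \<alpha> i \<in> {1..m}}"

definition dOmega :: "(nat \<Rightarrow> nat) \<Rightarrow> (nat \<Rightarrow> nat) \<Rightarrow> real" where
  "dOmega \<alpha> \<beta> = (if \<alpha> = \<beta> then 0 else (1/2) ^ (LEAST i. \<alpha> i \<noteq> \<beta> i))"

definition Omega_open :: "nat \<Rightarrow> (nat \<Rightarrow> nat) set set" where
  "Omega_open m = {U. U \<subseteq> Omega m \<and>
     (\<forall>x\<in>U. \<exists>e>0. \<forall>y\<in>Omega m. dOmega x y < e \<longrightarrow> y \<in> U)}"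

definition OmegaM :: "nat \<Rightarrow> (nat \<Rightarrow> nat) measure" where
  "OmegaM m = sigma (Omega m) (Omega_open m)"

definition PM :: "nat \<Rightarrow> (nat \<Rightarrow> nat) measure set" where
  "PM m = {\<mu>. prob_space \<mu> \<and> sets \<mu> = sets (OmegaM m)}"

definition Lip1 :: "nat \<Rightarrow> ((nat \<Rightarrow> nat) \<Rightarrow> real) set" where
  "Lip1 m = {f. \<forall>x\<in>Omega m. \<forall>y\<in>Omega m. \<bar>f x - f y\<bar> \<le> dOmega x y}"

definition dMK :: "nat \<Rightarrow> (nat \<Rightarrow> nat) measure \<Rightarrow> (nat \<Rightarrow> nat) measure \<Rightarrow> real" where
  "dMK m \<mu> \<nu> = Sup {(\<integral>x. f x \<partial>\<mu>) - (\<integral>x. f x \<partial>\<nu>) | f. f \<in> Lip1 m}"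

definition conv :: "nat \<Rightarrow> ((nat \<Rightarrow> nat) \<Rightarrow> (nat \<Rightarrow> nat) \<Rightarrow> (nat \<Rightarrow> nat))
    \<Rightarrow> (nat \<Rightarrow> nat) measure \<Rightarrow> (nat \<Rightarrow> nat) measure \<Rightarrow> (nat \<Rightarrow> nat) measure" where
  "conv m R \<nu> \<mu> = distr (\<nu> \<Otimes>\<^sub>M \<mu>) (OmegaM m) (\<lambda>(x, y). R x y)"

end

theory Submission
  imports Defs
begin

text \<open>For a 1-Lipschitz test function f, Fubini's theorem writes the integral of f against
  \<open>\<eta> * \<mu>\<close> as the integral against \<open>\<mu>\<close> of \<open>g y = \<integral> f (R x y) d\<eta>(x)\<close>. Since R is
  s-Lipschitz in its second argument, so is g, and \<open>g / s\<close> is a competitor in the supremum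
  defining \<open>d_MK(\<mu>, \<mu>')\<close>. Continuity of R is only needed for measurability: the preimage of an
  open set under R is a countable union of products of cylinders.\<close>

definition lipschitz_Omega :: "nat \<Rightarrow> real \<Rightarrow> ((nat \<Rightarrow> nat) \<Rightarrow> real) \<Rightarrow> bool" where
  "lipschitz_Omega m s h \<longleftrightarrow> (\<forall>x\<in>Omega m. \<forall>y\<in>Omega m. \<bar>h x - h y\<bar> \<le> s * dOmega x y)"

lemma Lip1_iff_lipschitz_Omega: "f \<in> Lip1 m \<longleftrightarrow> lipschitz_Omega m 1 f"
  by (simp add: Lip1_def lipschitz_Omega_def)

lemma dOmega_nonneg: "0 \<le> dOmega x y"
  by (simp add: dOmega_def)

lemma dOmega_le_1: "dOmega x y \<le> 1"
  by (simp add: dOmega_def power_le_one)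

lemma dOmega_pos: "x \<noteq> y \<Longrightarrow> 0 < dOmega x y"
  by (simp add: dOmega_def)

lemma dOmega_less_imp_agree:
  assumes "dOmega x y < (1/2)^n" and "i < n"
  shows "x i = y i"
proof (rule ccontr)
  assume ne: "x i \<noteq> y i"
  let ?k = "LEAST i. x i \<noteq> y i"
  have "?k \<le> i" using ne by (rule Least_le)
  then have "((1::real)/2)^n < (1/2)^?k" using assms(2)
    by (intro power_strict_decreasing) auto
  moreover have "x \<noteq> y" using ne by auto
  ultimately show False using assms(1) by (simp add: dOmega_def)
qed

lemma agree_imp_dOmega_le:
  assumes "\<And>i. i < n \<Longrightarrow> x i = y i"
  shows "dOmega x y \<le> (1/2)^n"
proof (cases "x = y")
  case False
  then obtain j where "x j \<noteq> y j" by auto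
  let ?k = "LEAST i. x i \<noteq> y i"
  have "x ?k \<noteq> y ?k" using \<open>x j \<noteq> y j\<close> by (rule LeastI)
  then have "n \<le> ?k" using assms by (meson not_le)
  then have "((1::real)/2)^?k \<le> (1/2)^n" by (intro power_decreasing) auto
  with False show ?thesis by (simp add: dOmega_def)
qed (simp add: dOmega_def)

lemma space_OmegaM [simp]: "space (OmegaM m) = Omega m"
  unfolding OmegaM_def by (rule space_measure_of) (auto simp: Omega_open_def)

lemma Omega_open_in_sets_OmegaM: "U \<in> Omega_open m \<Longrightarrow> U \<in> sets (OmegaM m)"
  unfolding OmegaM_def by (auto simp: Omega_open_def)

lemma lipschitz_Omega_measurable:
  assumes "lipschitz_Omega m s h"
  shows "h \<in> borel_measurable (OmegaM m)"
proof (rule borel_measurableI)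
  fix S :: "real set" assume "open S"
  have "h -` S \<inter> Omega m \<in> Omega_open m"
    unfolding Omega_open_def
  proof safe
    fix x assume x: "x \<in> Omega m" "h x \<in> S"
    obtain e where e: "e > 0" "\<And>z. dist z (h x) < e \<Longrightarrow> z \<in> S"
      using \<open>open S\<close> x(2) open_dist by metis
    show "\<exists>d>0. \<forall>y\<in>Omega m. dOmega x y < d \<longrightarrow> y \<in> h -` S \<inter> Omega m"
    proof (intro exI[of _ "e / (\<bar>s\<bar> + 1)"] conjI ballI impI)
      fix y assume y: "y \<in> Omega m" and d: "dOmega x y < e / (\<bar>s\<bar> + 1)"
      have "\<bar>h y - h x\<bar> \<le> s * dOmega x y"
        using assms x(1) y by (auto simp: lipschitz_Omega_def abs_minus_commute)
      also have "\<dots> \<le> (\<bar>s\<bar> + 1) * dOmega x y"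
        using dOmega_nonneg[of x y] by (intro mult_right_mono) auto
      also have "\<dots> < e"
        using d by (simp add: pos_less_divide_eq mult.commute)
      finally show "y \<in> h -` S \<inter> Omega m" using e(2) y by (simp add: dist_real_def)
    qed (use e in auto)
  qed
  then show "h -` S \<inter> space (OmegaM m) \<in> sets (OmegaM m)"
    by (simp add: Omega_open_in_sets_OmegaM)
qed

definition cylinder :: "nat \<Rightarrow> nat list \<Rightarrow> (nat \<Rightarrow> nat) set" where
  "cylinder m xs = {y \<in> Omega m. \<forall>i<length xs. y i = xs ! i}"

lemma cylinder_in_sets_OmegaM: "cylinder m xs \<in> sets (OmegaM m)"
proof (rule Omega_open_in_sets_OmegaM)
  show "cylinder m xs \<in> Omega_open m"
    unfolding Omega_open_def
  proof safe
    fix x assume x: "x \<in> cylinder m xs"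
    show "\<exists>e>0. \<forall>y\<in>Omega m. dOmega x y < e \<longrightarrow> y \<in> cylinder m xs"
    proof (intro exI[of _ "(1/2)^length xs"] conjI ballI impI)
      fix y assume "y \<in> Omega m" "dOmega x y < (1/2)^length xs"
      then show "y \<in> cylinder m xs"
        using x dOmega_less_imp_agree[of x y "length xs"] by (auto simp: cylinder_def)
    qed simp
  qed (auto simp: cylinder_def)
qed

lemma mem_cylinder_prefix: "x \<in> Omega m \<Longrightarrow> x \<in> cylinder m (map x [0..<n])"
  by (simp add: cylinder_def)

lemma dOmega_le_cylinder_prefix: "y \<in> cylinder m (map x [0..<n]) \<Longrightarrow> dOmega x y \<le> (1/2)^n"
  by (rule agree_imp_dOmega_le) (simp add: cylinder_def)

lemma sets_pair_OmegaM_if_cylinder_cover: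
  assumes "W \<subseteq> Omega m \<times> Omega m"
    and "\<And>x y. (x, y) \<in> W \<Longrightarrow>
           \<exists>n. cylinder m (map x [0..<n]) \<times> cylinder m (map y [0..<n]) \<subseteq> W"
  shows "W \<in> sets (OmegaM m \<Otimes>\<^sub>M OmegaM m)"
proof -
  define I where "I = {(xs, ys). cylinder m xs \<times> cylinder m ys \<subseteq> W}"
  have "W = (\<Union>(xs, ys)\<in>I. cylinder m xs \<times> cylinder m ys)"
  proof
    show "W \<subseteq> (\<Union>(xs, ys)\<in>I. cylinder m xs \<times> cylinder m ys)"
    proof clarify
      fix x y assume xy: "(x, y) \<in> W"
      then obtain n where "cylinder m (map x [0..<n]) \<times> cylinder m (map y [0..<n]) \<subseteq> W"
        using assms(2) by blast
      moreover have "(x, y) \<in> cylinder m (map x [0..<n]) \<times> cylinder m (map y [0..<n])"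
        using xy assms(1) by (auto intro: mem_cylinder_prefix)
      ultimately show "(x, y) \<in> (\<Union>(xs, ys)\<in>I. cylinder m xs \<times> cylinder m ys)"
        unfolding I_def by blast
    qed
  qed (auto simp: I_def)
  also have "\<dots> \<in> sets (OmegaM m \<Otimes>\<^sub>M OmegaM m)"
  proof (rule sets.countable_UN')
    show "countable I" by (rule countable_subset[OF subset_UNIV]) simp
    show "(\<lambda>(xs, ys). cylinder m xs \<times> cylinder m ys) ` I \<subseteq> sets (OmegaM m \<Otimes>\<^sub>M OmegaM m)"
      by (auto intro!: pair_measureI cylinder_in_sets_OmegaM)
  qed
  finally show ?thesis .
qed

lemma measurable_continuous_Omega_binop:
  fixes R :: "(nat \<Rightarrow> nat) \<Rightarrow> (nat \<Rightarrow> nat) \<Rightarrow> (nat \<Rightarrow> nat)"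
  assumes R_into: "\<forall>x\<in>Omega m. \<forall>y\<in>Omega m. R x y \<in> Omega m"
    and R_cont: "\<forall>x\<in>Omega m. \<forall>y\<in>Omega m. \<forall>e>0. \<exists>\<delta>>0. \<forall>x'\<in>Omega m. \<forall>y'\<in>Omega m.
                   dOmega x x' < \<delta> \<and> dOmega y y' < \<delta> \<longrightarrow> dOmega (R x y) (R x' y') < e"
  shows "(\<lambda>(x, y). R x y) \<in> OmegaM m \<Otimes>\<^sub>M OmegaM m \<rightarrow>\<^sub>M OmegaM m"
proof -
  have "(\<lambda>(x, y). R x y) \<in> OmegaM m \<Otimes>\<^sub>M OmegaM m \<rightarrow>\<^sub>M sigma (Omega m) (Omega_open m)"
  proof (rule measurable_measure_of)
    show "Omega_open m \<subseteq> Pow (Omega m)" by (auto simp: Omega_open_def)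
    show "(\<lambda>(x, y). R x y) \<in> space (OmegaM m \<Otimes>\<^sub>M OmegaM m) \<rightarrow> Omega m"
      using R_into by (auto simp: space_pair_measure)
  next
    fix U assume U: "U \<in> Omega_open m"
    show "(\<lambda>(x, y). R x y) -` U \<inter> space (OmegaM m \<Otimes>\<^sub>M OmegaM m) \<in> sets (OmegaM m \<Otimes>\<^sub>M OmegaM m)"
    proof (rule sets_pair_OmegaM_if_cylinder_cover)
      fix x y assume "(x, y) \<in> (\<lambda>(x, y). R x y) -` U \<inter> space (OmegaM m \<Otimes>\<^sub>M OmegaM m)"
      then have x: "x \<in> Omega m" and y: "y \<in> Omega m" and "R x y \<in> U"
        by (auto simp: space_pair_measure)
      then obtain e where e: "e > 0" "\<forall>w\<in>Omega m. dOmega (R x y) w < e \<longrightarrow> w \<in> U"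
        using U unfolding Omega_open_def by blast
      obtain \<delta> where \<delta>: "\<delta> > 0" "\<forall>x'\<in>Omega m. \<forall>y'\<in>Omega m.
                   dOmega x x' < \<delta> \<and> dOmega y y' < \<delta> \<longrightarrow> dOmega (R x y) (R x' y') < e"
        using R_cont x y e(1) by blast
      obtain n where n: "((1::real)/2)^n < \<delta>"
        using real_arch_pow_inv[OF \<delta>(1), of "1/2"] by auto
      have "R x' y' \<in> U"
        if "x' \<in> cylinder m (map x [0..<n])" "y' \<in> cylinder m (map y [0..<n])" for x' y'
        using that dOmega_le_cylinder_prefix[OF that(1)] dOmega_le_cylinder_prefix[OF that(2)]
          n \<delta>(2) e(2) R_into by (simp add: cylinder_def)
      then show "\<exists>n. cylinder m (map x [0..<n]) \<times> cylinder m (map y [0..<n])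
                   \<subseteq> (\<lambda>(x, y). R x y) -` U \<inter> space (OmegaM m \<Otimes>\<^sub>M OmegaM m)"
        by (intro exI[of _ n]) (auto simp: space_pair_measure cylinder_def)
    qed (auto simp: space_pair_measure)
  qed
  then show ?thesis by (simp only: OmegaM_def)
qed

lemma prob_space_PM: "\<nu> \<in> PM m \<Longrightarrow> prob_space \<nu>"
  by (simp add: PM_def)

lemma sets_PM: "\<nu> \<in> PM m \<Longrightarrow> sets \<nu> = sets (OmegaM m)"
  by (simp add: PM_def)

lemma space_PM: "\<nu> \<in> PM m \<Longrightarrow> space \<nu> = Omega m"
  using sets_eq_imp_space_eq[OF sets_PM] by simp

lemma measurable_PM: "\<nu> \<in> PM m \<Longrightarrow> measurable \<nu> N = measurable (OmegaM m) N"
  by (rule measurable_cong_sets[OF sets_PM refl])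

lemma measurable_pair_PM:
  "\<nu> \<in> PM m \<Longrightarrow> \<nu>' \<in> PM m \<Longrightarrow>
     measurable (\<nu> \<Otimes>\<^sub>M \<nu>') N = measurable (OmegaM m \<Otimes>\<^sub>M OmegaM m) N"
  by (intro measurable_cong_sets sets_pair_measure_cong sets_PM refl)

lemma PM_imp_Omega_nonempty: "\<nu> \<in> PM m \<Longrightarrow> Omega m \<noteq> {}"
  using prob_space.not_empty[OF prob_space_PM] space_PM by metis

lemma integral_PM_eq_const:
  fixes h :: "(nat \<Rightarrow> nat) \<Rightarrow> real"
  assumes "\<nu> \<in> PM m" and "\<And>x. x \<in> Omega m \<Longrightarrow> h x = a"
  shows "(\<integral>x. h x \<partial>\<nu>) = a"
proof -
  interpret prob_space \<nu> using assms(1) by (rule prob_space_PM)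
  have "(\<integral>x. h x \<partial>\<nu>) = (\<integral>x. a \<partial>\<nu>)"
    using assms by (intro Bochner_Integration.integral_cong) (simp_all add: space_PM)
  also have "\<dots> = a"
    using prob_space by simp
  finally show ?thesis .
qed

lemma integrable_PM_bounded:
  fixes h :: "(nat \<Rightarrow> nat) \<Rightarrow> real"
  assumes "\<nu> \<in> PM m" and "h \<in> borel_measurable (OmegaM m)"
    and "\<And>x. x \<in> Omega m \<Longrightarrow> \<bar>h x\<bar> \<le> B"
  shows "integrable \<nu> h"
proof -
  interpret prob_space \<nu> using assms(1) by (rule prob_space_PM)
  show ?thesis
    using assms by (intro integrable_const_bound[where B = B] AE_I2)
      (simp_all add: space_PM measurable_PM)
qed

lemma abs_integral_PM_diff_le:
  fixes h :: "(nat \<Rightarrow> nat) \<Rightarrow> real"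
  assumes "\<nu> \<in> PM m" and "integrable \<nu> h"
    and "\<And>x. x \<in> Omega m \<Longrightarrow> \<bar>h x - a\<bar> \<le> B"
  shows "\<bar>(\<integral>x. h x \<partial>\<nu>) - a\<bar> \<le> B"
proof -
  interpret prob_space \<nu> using assms(1) by (rule prob_space_PM)
  have "(\<integral>x. h x \<partial>\<nu>) \<le> a + B" "a - B \<le> (\<integral>x. h x \<partial>\<nu>)"
    using assms(1,3) abs_le_D1 abs_le_D2
    by (intro integral_le_const integral_ge_const assms(2) AE_I2; fastforce simp: space_PM)+
  then show ?thesis by linarith
qed

lemma lipschitz_Omega_oscillation:
  assumes "lipschitz_Omega m s h" and "x \<in> Omega m" and "c \<in> Omega m"
  shows "\<bar>h x - h c\<bar> \<le> \<bar>s\<bar>"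
proof -
  have "\<bar>h x - h c\<bar> \<le> s * dOmega x c"
    using assms by (simp add: lipschitz_Omega_def)
  also have "\<dots> \<le> \<bar>s\<bar> * 1"
    using dOmega_nonneg[of x c] dOmega_le_1[of x c]
    by (intro order.trans[OF mult_right_mono mult_left_mono]) auto
  finally show ?thesis by simp
qed

lemma lipschitz_Omega_bounded:
  assumes "lipschitz_Omega m s h" and "x \<in> Omega m" and "c \<in> Omega m"
  shows "\<bar>h x\<bar> \<le> \<bar>h c\<bar> + \<bar>s\<bar>"
  using abs_triangle_ineq2[of "h x" "h c"] lipschitz_Omega_oscillation[OF assms] by linarith

lemma integrable_PM_lipschitz:
  assumes "\<nu> \<in> PM m" and "lipschitz_Omega m s h"
  shows "integrable \<nu> h"
proof -
  obtain c where "c \<in> Omega m" using PM_imp_Omega_nonempty[OF assms(1)] by blast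
  with assms show ?thesis
    by (intro integrable_PM_bounded[where B = "\<bar>h c\<bar> + \<bar>s\<bar>"]
        lipschitz_Omega_measurable lipschitz_Omega_bounded)
qed

lemma integral_diff_le_lipschitz_oscillation:
  assumes "\<nu> \<in> PM m" "\<nu>' \<in> PM m" and "lipschitz_Omega m s h"
  shows "(\<integral>x. h x \<partial>\<nu>) - (\<integral>x. h x \<partial>\<nu>') \<le> 2 * \<bar>s\<bar>"
proof -
  obtain c where c: "c \<in> Omega m" using PM_imp_Omega_nonempty[OF assms(1)] by blast
  have "\<bar>(\<integral>x. h x \<partial>\<mu>) - h c\<bar> \<le> \<bar>s\<bar>" if "\<mu> \<in> PM m" for \<mu>
    using lipschitz_Omega_oscillation[OF assms(3) _ c]
    by (intro abs_integral_PM_diff_le[OF that] integrable_PM_lipschitz[OF that assms(3)])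
  from this[OF assms(1)] this[OF assms(2)] show ?thesis by linarith
qed

lemma dMK_upper:
  assumes "\<nu> \<in> PM m" "\<nu>' \<in> PM m" and "f \<in> Lip1 m"
  shows "(\<integral>x. f x \<partial>\<nu>) - (\<integral>x. f x \<partial>\<nu>') \<le> dMK m \<nu> \<nu>'"
proof -
  have "bdd_above {(\<integral>x. f x \<partial>\<nu>) - (\<integral>x. f x \<partial>\<nu>') | f. f \<in> Lip1 m}"
    using integral_diff_le_lipschitz_oscillation[OF assms(1,2)]
    by (auto simp: bdd_above_def Lip1_iff_lipschitz_Omega)
  then show ?thesis
    unfolding dMK_def by (rule cSup_upper[rotated]) (use assms(3) in blast)
qed

lemma dMK_le:
  assumes "\<And>f. f \<in> Lip1 m \<Longrightarrow> (\<integral>x. f x \<partial>\<nu>) - (\<integral>x. f x \<partial>\<nu>') \<le> a"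
  shows "dMK m \<nu> \<nu>' \<le> a"
proof -
  have "(\<lambda>_. 0) \<in> Lip1 m" by (simp add: Lip1_def dOmega_nonneg)
  then show ?thesis
    unfolding dMK_def by (intro cSup_least) (use assms in auto)
qed

lemma lipschitz_Omega_nonpos_imp_const:
  assumes "lipschitz_Omega m s h" and "s \<le> 0" and "x \<in> Omega m" "y \<in> Omega m"
  shows "h x = h y"
  using assms mult_nonpos_nonneg[OF assms(2) dOmega_nonneg[of x y]]
  by (force simp: lipschitz_Omega_def)

lemma lipschitz_Omega_neg_imp_subsingleton:
  assumes "lipschitz_Omega m s h" and "s < 0" and "x \<in> Omega m" "y \<in> Omega m"
  shows "x = y"
proof (rule ccontr)
  assume "x \<noteq> y"
  then have "s * dOmega x y < 0" using \<open>s < 0\<close> by (simp add: dOmega_pos mult_neg_pos)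
  then show False
    using assms by (force simp: lipschitz_Omega_def)
qed

lemma integral_diff_le_lipschitz_dMK:
  assumes \<nu>: "\<nu> \<in> PM m" and \<nu>': "\<nu>' \<in> PM m" and h: "lipschitz_Omega m s h"
  shows "(\<integral>x. h x \<partial>\<nu>) - (\<integral>x. h x \<partial>\<nu>') \<le> s * dMK m \<nu> \<nu>'"
proof (cases "s > 0")
  case True
  have "(\<lambda>x. h x / s) \<in> Lip1 m"
    using h True by (simp add: Lip1_def lipschitz_Omega_def pos_divide_le_eq mult.commute
        flip: diff_divide_distrib)
  from dMK_upper[OF \<nu> \<nu>' this]
  have "((\<integral>x. h x \<partial>\<nu>) - (\<integral>x. h x \<partial>\<nu>')) / s \<le> dMK m \<nu> \<nu>'"
    by (simp add: diff_divide_distrib)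
  then show ?thesis using True by (simp add: pos_divide_le_eq mult.commute)
next
  case False
  obtain c where c: "c \<in> Omega m" using PM_imp_Omega_nonempty[OF \<nu>] by blast
  have "(\<integral>x. h x \<partial>\<mu>) = h c" if "\<mu> \<in> PM m" for \<mu>
    using lipschitz_Omega_nonpos_imp_const[OF h _ _ c] False
    by (intro integral_PM_eq_const[OF that]) auto
  then have "(\<integral>x. h x \<partial>\<nu>) - (\<integral>x. h x \<partial>\<nu>') = 0" using \<nu> \<nu>' by simp
  moreover have "0 \<le> s * dMK m \<nu> \<nu>'"
  proof (cases "s = 0")
    case False
    with \<open>\<not> s > 0\<close> have "s < 0" by simp
    have "dMK m \<nu> \<nu>' \<le> 0"
    proof (rule dMK_le)
      fix f :: "(nat \<Rightarrow> nat) \<Rightarrow> real"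
      have "f x = f c" if "x \<in> Omega m" for x
        using lipschitz_Omega_neg_imp_subsingleton[OF h \<open>s < 0\<close> that c] by simp
      then show "(\<integral>x. f x \<partial>\<nu>) - (\<integral>x. f x \<partial>\<nu>') \<le> 0"
        using integral_PM_eq_const[OF \<nu>] integral_PM_eq_const[OF \<nu>'] by simp
    qed
    with \<open>s < 0\<close> show ?thesis by (simp add: mult_nonpos_nonpos)
  qed simp
  ultimately show ?thesis by simp
qed

lemma integral_conv:
  fixes f :: "(nat \<Rightarrow> nat) \<Rightarrow> real"
  assumes \<eta>: "\<eta> \<in> PM m" and \<nu>: "\<nu> \<in> PM m"
    and R: "(\<lambda>(x, y). R x y) \<in> OmegaM m \<Otimes>\<^sub>M OmegaM m \<rightarrow>\<^sub>M OmegaM m"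
    and f: "f \<in> borel_measurable (OmegaM m)" and f_bounded: "\<And>z. z \<in> Omega m \<Longrightarrow> \<bar>f z\<bar> \<le> B"
  shows "(\<integral>z. f z \<partial>conv m R \<eta> \<nu>) = (\<integral>y. (\<integral>x. f (R x y) \<partial>\<eta>) \<partial>\<nu>)"
proof -
  interpret pair_prob_space \<eta> \<nu>
    using prob_space_PM[OF \<eta>] prob_space_PM[OF \<nu>]
    by (simp add: pair_prob_space_def pair_sigma_finite_def prob_space_imp_sigma_finite)
  have R': "(\<lambda>(x, y). R x y) \<in> \<eta> \<Otimes>\<^sub>M \<nu> \<rightarrow>\<^sub>M OmegaM m"
    using R by (simp add: measurable_pair_PM[OF \<eta> \<nu>])
  have "integrable (\<eta> \<Otimes>\<^sub>M \<nu>) (\<lambda>(x, y). f (R x y))"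
  proof (intro integrable_const_bound[where B = B] AE_I2)
    show "(\<lambda>(x, y). f (R x y)) \<in> borel_measurable (\<eta> \<Otimes>\<^sub>M \<nu>)"
      using measurable_compose[OF R' f] by (simp add: case_prod_beta')
    fix z assume "z \<in> space (\<eta> \<Otimes>\<^sub>M \<nu>)"
    then show "norm ((\<lambda>(x, y). f (R x y)) z) \<le> B"
      using measurable_space[OF R'] f_bounded by (auto simp: case_prod_beta')
  qed
  then have "(\<integral>y. (\<integral>x. f (R x y) \<partial>\<eta>) \<partial>\<nu>) = (\<integral>z. f ((\<lambda>(x, y). R x y) z) \<partial>(\<eta> \<Otimes>\<^sub>M \<nu>))"
    by (simp add: integral_snd case_prod_beta')
  also have "\<dots> = (\<integral>z. f z \<partial>conv m R \<eta> \<nu>)"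
    unfolding conv_def by (rule integral_distr[OF R' f, symmetric])
  finally show ?thesis ..
qed

lemma lipschitz_Omega_integral_kernel:
  assumes \<eta>: "\<eta> \<in> PM m"
    and R: "(\<lambda>(x, y). R x y) \<in> OmegaM m \<Otimes>\<^sub>M OmegaM m \<rightarrow>\<^sub>M OmegaM m"
    and R_lip: "\<forall>x\<in>Omega m. \<forall>y\<in>Omega m. \<forall>y'\<in>Omega m.
                  dOmega (R x y) (R x y') \<le> s * dOmega y y'"
    and f: "lipschitz_Omega m 1 f"
  shows "lipschitz_Omega m s (\<lambda>y. \<integral>x. f (R x y) \<partial>\<eta>)"
  unfolding lipschitz_Omega_def
proof safe
  have R_into: "R x y \<in> Omega m" if "x \<in> Omega m" "y \<in> Omega m" for x y
    using measurable_space[OF R, of "(x, y)"] that by (simp add: space_pair_measure)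
  have integrable: "integrable \<eta> (\<lambda>x. f (R x y))" if y: "y \<in> Omega m" for y
  proof (rule integrable_PM_bounded[OF \<eta>])
    show "(\<lambda>x. f (R x y)) \<in> borel_measurable (OmegaM m)"
      using measurable_Pair1[OF R, of y] y lipschitz_Omega_measurable[OF f] by simp
    show "\<bar>f (R x y)\<bar> \<le> \<bar>f y\<bar> + \<bar>1\<bar>" if "x \<in> Omega m" for x
      using f R_into[OF that y] y by (rule lipschitz_Omega_bounded)
  qed
  fix y y' assume y: "y \<in> Omega m" and y': "y' \<in> Omega m"
  have "\<bar>f (R x y) - f (R x y')\<bar> \<le> s * dOmega y y'" if x: "x \<in> Omega m" for x
  proof -
    have "\<bar>f (R x y) - f (R x y')\<bar> \<le> dOmega (R x y) (R x y')"
      using f R_into[OF x y] R_into[OF x y'] unfolding lipschitz_Omega_def by simp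
    also have "\<dots> \<le> s * dOmega y y'"
      using R_lip x y y' by simp
    finally show ?thesis .
  qed
  then have "\<bar>(\<integral>x. f (R x y) - f (R x y') \<partial>\<eta>) - 0\<bar> \<le> s * dOmega y y'"
    by (intro abs_integral_PM_diff_le[OF \<eta>] Bochner_Integration.integrable_diff
        integrable[OF y] integrable[OF y']) auto
  then show "\<bar>(\<integral>x. f (R x y) \<partial>\<eta>) - (\<integral>x. f (R x y') \<partial>\<eta>)\<bar> \<le> s * dOmega y y'"
    by (simp add: Bochner_Integration.integral_diff[OF integrable[OF y] integrable[OF y']])
qed

theorem lemma3p1:
  fixes m :: nat and s :: real
    and R :: "(nat \<Rightarrow> nat) \<Rightarrow> (nat \<Rightarrow> nat) \<Rightarrow> (nat \<Rightarrow> nat)"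
    and \<eta> \<mu> \<mu>' :: "(nat \<Rightarrow> nat) measure"
  assumes R_into: "\<forall>x\<in>Omega m. \<forall>y\<in>Omega m. R x y \<in> Omega m"
    and R_cont: "\<forall>x\<in>Omega m. \<forall>y\<in>Omega m. \<forall>e>0. \<exists>\<delta>>0. \<forall>x'\<in>Omega m. \<forall>y'\<in>Omega m.
                   dOmega x x' < \<delta> \<and> dOmega y y' < \<delta> \<longrightarrow> dOmega (R x y) (R x' y') < e"
    and R_lip: "\<forall>x\<in>Omega m. \<forall>y\<in>Omega m. \<forall>y'\<in>Omega m.
                   dOmega (R x y) (R x y') \<le> s * dOmega y y'"
    and \<eta>: "\<eta> \<in> PM m" and \<mu>: "\<mu> \<in> PM m" and \<mu>': "\<mu>' \<in> PM m"
  shows "dMK m (conv m R \<eta> \<mu>) (conv m R \<eta> \<mu>') \<le> s * dMK m \<mu> \<mu>'"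
proof (rule dMK_le)
  fix f assume "f \<in> Lip1 m"
  then have f: "lipschitz_Omega m 1 f" by (simp add: Lip1_iff_lipschitz_Omega)
  have R: "(\<lambda>(x, y). R x y) \<in> OmegaM m \<Otimes>\<^sub>M OmegaM m \<rightarrow>\<^sub>M OmegaM m"
    using R_into R_cont by (rule measurable_continuous_Omega_binop)
  obtain c where c: "c \<in> Omega m" using PM_imp_Omega_nonempty[OF \<eta>] by blast
  have integral_conv_eq:
      "(\<integral>z. f z \<partial>conv m R \<eta> \<nu>) = (\<integral>y. (\<integral>x. f (R x y) \<partial>\<eta>) \<partial>\<nu>)" if "\<nu> \<in> PM m" for \<nu>
    using \<eta> that R lipschitz_Omega_measurable[OF f] lipschitz_Omega_bounded[OF f _ c]
    by (rule integral_conv)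
  have "lipschitz_Omega m s (\<lambda>y. \<integral>x. f (R x y) \<partial>\<eta>)"
    using \<eta> R R_lip f by (rule lipschitz_Omega_integral_kernel)
  then show "(\<integral>z. f z \<partial>conv m R \<eta> \<mu>) - (\<integral>z. f z \<partial>conv m R \<eta> \<mu>') \<le> s * dMK m \<mu> \<mu>'"
    unfolding integral_conv_eq[OF \<mu>] integral_conv_eq[OF \<mu>']
    by (rule integral_diff_le_lipschitz_dMK[OF \<mu> \<mu>'])
qed

end
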